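(* Let $G$ be a finite semi-3-abelian 3-group, let $x\in\Omega_{1}(G)$, let $k\ge 1$ and $g_1,\dots,g_k\in G$. Then for every permutation $\sigma$ of $\{1,\dots,k\}$, $$[x,g_{\sigma(1)},g_{\sigma(2)},\dots,g_{\sigma(k)}]=[x,g_{1},g_{2},\dots,g_{k}]^{2^{\delta(\sigma)}},$$ where $\delta(\sigma)=0$ if $\sigma$ is an even permutation and $\delta(\sigma)=1$ if $\sigma$ is odd.
   Context: A finite 3-group $G$ is semi-3-abelian if for all $a,b\in G$: $(ab)^{3}=1$ if and only if $a^{3}b^{3}=1$. $\Omega_{1}(G)=\langle g\in G : g^{3}=1\rangle$. Commutators: $[x,y]=x^{-1}y^{-1}xy$, and left-normed $[x_1,\dots,x_n]=[[x_1,\dots,x_{n-1}],x_n]$. *)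

theory Defs
  imports "HOL-Algebra.Algebra" "HOL-Combinatorics.Permutations"
begin

definition comm :: "('a, 'b) monoid_scheme \<Rightarrow> 'a \<Rightarrow> 'a \<Rightarrow> 'a" where
  "comm G x y = inv\<^bsub>G\<^esub> x \<otimes>\<^bsub>G\<^esub> inv\<^bsub>G\<^esub> y \<otimes>\<^bsub>G\<^esub> x \<otimes>\<^bsub>G\<^esub> y"

definition lcomm :: "('a, 'b) monoid_scheme \<Rightarrow> 'a \<Rightarrow> 'a list \<Rightarrow> 'a" where
  "lcomm G x ys = foldl (comm G) x ys"

definition p_group :: "nat \<Rightarrow> ('a, 'b) monoid_scheme \<Rightarrow> bool" where
  "p_group p G \<longleftrightarrow> group G \<and> finite (carrier G) \<and> (\<exists>n. order G = p ^ n)"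

definition semi_3_abelian :: "('a, 'b) monoid_scheme \<Rightarrow> bool" where
  "semi_3_abelian G \<longleftrightarrow> (\<forall>a\<in>carrier G. \<forall>b\<in>carrier G.
     (a \<otimes>\<^bsub>G\<^esub> b) [^]\<^bsub>G\<^esub> (3::nat) = \<one>\<^bsub>G\<^esub> \<longleftrightarrow>
     a [^]\<^bsub>G\<^esub> (3::nat) \<otimes>\<^bsub>G\<^esub> b [^]\<^bsub>G\<^esub> (3::nat) = \<one>\<^bsub>G\<^esub>)"

definition Omega1 :: "('a, 'b) monoid_scheme \<Rightarrow> 'a set" where
  "Omega1 G = generate G {g \<in> carrier G. g [^]\<^bsub>G\<^esub> (3::nat) = \<one>\<^bsub>G\<^esub>}"

end

theory Submission
  imports Defs
begin

text \<open>
  In a semi-3-abelian group the elements y with y^3 = 1 form a subgroup, which is therefore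
  Omega_1(G), and for such y and any t one has y y^t y^(t^2) = 1: apply the defining property to
  the factorisation t (y t^-1) of a cube root of unity. It follows that y commutes with y^t, so
  the normal closure M of x in Omega_1(G) is abelian of exponent 3 and satisfies [m,g,g] = 1.
  Written additively, every g acts on M by the endomorphism D_g = [-,g] with D_g^2 = 0, and
  linearising D_(gh)^2 = 0 gives D_g D_h = -D_h D_g. So interchanging two entries of a left-normed
  commutator starting in M inverts it, a permutation acts through its sign, and z^-1 = z^2 in M.
\<close>

definition conjugate :: "('a, 'b) monoid_scheme \<Rightarrow> 'a \<Rightarrow> 'a \<Rightarrow> 'a" where
  "conjugate G t y = inv\<^bsub>G\<^esub> t \<otimes>\<^bsub>G\<^esub> y \<otimes>\<^bsub>G\<^esub> t"

definition normal_closure :: "('a, 'b) monoid_scheme \<Rightarrow> 'a \<Rightarrow> 'a set" where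
  "normal_closure G x = generate G {conjugate G t x | t. t \<in> carrier G}"

lemma lcomm_Nil [simp]: "lcomm G m [] = m"
  by (simp add: lcomm_def)

lemma lcomm_Cons [simp]: "lcomm G m (y # ys) = lcomm G (comm G m y) ys"
  by (simp add: lcomm_def)

lemma lcomm_append: "lcomm G m (ys @ zs) = lcomm G (lcomm G m ys) zs"
  by (simp add: lcomm_def)

lemma split_list_two:
  assumes "a \<in> set xs" "b \<in> set xs" "a \<noteq> b"
  obtains A B C where "xs = A @ a # B @ b # C \<or> xs = A @ b # B @ a # C"
proof -
  obtain A R where xs: "xs = A @ a # R" using split_list[OF assms(1)] by blast
  then have "b \<in> set A \<or> b \<in> set R" using assms(2,3) by auto
  then show ?thesis
  proof
    assume "b \<in> set A"
    then obtain B C where "A = B @ b # C" using split_list by metis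
    then show ?thesis using that[of B C R] xs by simp
  next
    assume "b \<in> set R"
    then obtain B C where "R = B @ b # C" using split_list by metis
    then show ?thesis using that[of A B C] xs by simp
  qed
qed

context group
begin

lemma inv_mult_cancel_left: "x \<in> carrier G \<Longrightarrow> y \<in> carrier G \<Longrightarrow> inv x \<otimes> (x \<otimes> y) = y"
  by (metis inv_closed l_inv l_one m_assoc)

lemma mult_inv_cancel_left: "x \<in> carrier G \<Longrightarrow> y \<in> carrier G \<Longrightarrow> x \<otimes> (inv x \<otimes> y) = y"
  by (metis inv_closed r_inv l_one m_assoc)

lemmas group_word_simps = m_assoc inv_mult_group inv_mult_cancel_left mult_inv_cancel_left

lemma nat_pow_3: "z \<in> carrier G \<Longrightarrow> z [^] (3::nat) = z \<otimes> z \<otimes> z"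
  by (simp add: numeral_3_eq_3)

lemma conjugate_closed [simp]: "t \<in> carrier G \<Longrightarrow> y \<in> carrier G \<Longrightarrow> conjugate G t y \<in> carrier G"
  by (simp add: conjugate_def)

lemma conjugate_one [simp]: "y \<in> carrier G \<Longrightarrow> conjugate G \<one> y = y"
  by (simp add: conjugate_def)

lemma conjugate_one_right [simp]: "t \<in> carrier G \<Longrightarrow> conjugate G t \<one> = \<one>"
  by (simp add: conjugate_def)

lemma conjugate_mult:
  "\<lbrakk>t \<in> carrier G; a \<in> carrier G; b \<in> carrier G\<rbrakk>
    \<Longrightarrow> conjugate G t (a \<otimes> b) = conjugate G t a \<otimes> conjugate G t b"
  by (simp add: conjugate_def group_word_simps)

lemma conjugate_inv: "t \<in> carrier G \<Longrightarrow> a \<in> carrier G \<Longrightarrow> conjugate G t (inv a) = inv (conjugate G t a)"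
  by (simp add: conjugate_def group_word_simps)

lemma conjugate_conjugate:
  "\<lbrakk>t \<in> carrier G; s \<in> carrier G; y \<in> carrier G\<rbrakk>
    \<Longrightarrow> conjugate G t (conjugate G s y) = conjugate G (s \<otimes> t) y"
  by (simp add: conjugate_def group_word_simps)

lemma conjugate_nat_pow:
  "t \<in> carrier G \<Longrightarrow> y \<in> carrier G \<Longrightarrow> conjugate G t (y [^] (n::nat)) = conjugate G t y [^] n"
  by (induction n) (simp_all add: conjugate_mult)

lemma comm_eq_inv_mult_conjugate:
  "m \<in> carrier G \<Longrightarrow> g \<in> carrier G \<Longrightarrow> comm G m g = inv m \<otimes> conjugate G g m"
  by (simp add: comm_def conjugate_def m_assoc)

lemma comm_one_left [simp]: "g \<in> carrier G \<Longrightarrow> comm G \<one> g = \<one>"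
  by (simp add: comm_def)

lemma commute_with_generate:
  assumes "S \<subseteq> carrier G" and "c \<in> carrier G" and "\<And>s. s \<in> S \<Longrightarrow> c \<otimes> s = s \<otimes> c"
    and "b \<in> generate G S"
  shows "c \<otimes> b = b \<otimes> c"
  using assms(4)
proof (induction b rule: generate.induct)
  case one
  then show ?case using assms(2) by simp
next
  case (incl h)
  then show ?case by (rule assms(3))
next
  case (inv h)
  have h: "h \<in> carrier G" using inv assms(1) by blast
  have "c \<otimes> inv h = inv h \<otimes> (h \<otimes> c) \<otimes> inv h"
    using h assms(2) by (simp add: group_word_simps)
  also have "\<dots> = inv h \<otimes> c"
    using h assms(2) by (simp add: assms(3)[OF inv, symmetric] group_word_simps)
  finally show ?case .
next
  case (eng h1 h2)
  have h: "h1 \<in> carrier G" "h2 \<in> carrier G"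
    using eng.hyps generate_in_carrier[OF assms(1)] by auto
  have "c \<otimes> (h1 \<otimes> h2) = h1 \<otimes> (c \<otimes> h2)"
    using h assms(2) eng.IH(1) by (simp add: m_assoc[symmetric])
  also have "\<dots> = h1 \<otimes> h2 \<otimes> c"
    using h assms(2) eng.IH(2) by (simp add: m_assoc)
  finally show ?case .
qed

lemma generate_pairwise_commute:
  assumes "S \<subseteq> carrier G" and "\<And>a b. a \<in> S \<Longrightarrow> b \<in> S \<Longrightarrow> a \<otimes> b = b \<otimes> a"
    and "a \<in> generate G S" and "b \<in> generate G S"
  shows "a \<otimes> b = b \<otimes> a"
proof -
  have "s \<otimes> b = b \<otimes> s" if "s \<in> S" for s
    using that assms(1) by (intro commute_with_generate[OF assms(1) _ _ assms(4)] assms(2)) auto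
  moreover have "b \<in> carrier G"
    using assms(1,4) generate_in_carrier by blast
  ultimately show ?thesis
    using commute_with_generate[OF assms(1) _ _ assms(3)] by metis
qed

end

locale exp3_abelian_normal = group G for M and G (structure) +
  assumes normal: "M \<lhd> G"
    and abelian: "a \<in> M \<Longrightarrow> b \<in> M \<Longrightarrow> a \<otimes> b = b \<otimes> a"
    and cube: "m \<in> M \<Longrightarrow> m [^] (3::nat) = \<one>"
begin

lemma subgroup_M: "subgroup M G"
  using normal by (rule normal_imp_subgroup)

lemma M_carrier [simp]: "m \<in> M \<Longrightarrow> m \<in> carrier G"
  using subgroup.subset[OF subgroup_M] by blast

lemma M_mult [simp]: "a \<in> M \<Longrightarrow> b \<in> M \<Longrightarrow> a \<otimes> b \<in> M"
  by (rule subgroup.m_closed[OF subgroup_M])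

lemma M_inv [simp]: "a \<in> M \<Longrightarrow> inv a \<in> M"
  by (rule subgroup.m_inv_closed[OF subgroup_M])

lemma conjugate_M [simp]: "m \<in> M \<Longrightarrow> t \<in> carrier G \<Longrightarrow> conjugate G t m \<in> M"
  unfolding conjugate_def by (rule normal.inv_op_closed1[OF normal])

lemma M_left_commute:
  assumes "a \<in> M" "b \<in> M" "c \<in> M" shows "a \<otimes> (b \<otimes> c) = b \<otimes> (a \<otimes> c)"
proof -
  have "a \<otimes> (b \<otimes> c) = a \<otimes> b \<otimes> c" using assms by (simp add: m_assoc)
  also have "\<dots> = b \<otimes> a \<otimes> c" using assms by (simp add: abelian)
  finally show ?thesis using assms by (simp add: m_assoc)
qed

lemma M_cube_eq_one: "a \<in> M \<Longrightarrow> a \<otimes> (a \<otimes> a) = \<one>"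
  using cube[of a] nat_pow_3[of a] by (simp add: m_assoc)

lemma M_cube_assoc:
  assumes "a \<in> M" "w \<in> carrier G" shows "a \<otimes> (a \<otimes> (a \<otimes> w)) = w"
proof -
  have "a \<otimes> (a \<otimes> (a \<otimes> w)) = a \<otimes> (a \<otimes> a) \<otimes> w" using assms by (simp add: m_assoc)
  then show ?thesis using assms by (simp add: M_cube_eq_one)
qed

lemma M_inv_eq_square: "a \<in> M \<Longrightarrow> inv a = a \<otimes> a"
  using M_cube_eq_one[of a] by (intro inv_equality) (simp_all add: m_assoc)

text \<open>Inverses are rewritten to squares, so that these rules normalise words over M by ordered
  rewriting.\<close>

lemmas M_ac_simps = m_assoc abelian M_left_commute M_inv_eq_square M_cube_eq_one M_cube_assoc

lemma comm_M [simp]: "m \<in> M \<Longrightarrow> g \<in> carrier G \<Longrightarrow> comm G m g \<in> M"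
  by (simp add: comm_eq_inv_mult_conjugate)

lemma comm_mult_left:
  "\<lbrakk>a \<in> M; b \<in> M; g \<in> carrier G\<rbrakk> \<Longrightarrow> comm G (a \<otimes> b) g = comm G a g \<otimes> comm G b g"
  by (simp add: comm_eq_inv_mult_conjugate conjugate_mult M_ac_simps)

lemma comm_inv_left: "a \<in> M \<Longrightarrow> g \<in> carrier G \<Longrightarrow> comm G (inv a) g = inv (comm G a g)"
  by (simp add: comm_eq_inv_mult_conjugate conjugate_mult conjugate_inv M_ac_simps)

lemma comm_mult_right:
  "\<lbrakk>m \<in> M; g \<in> carrier G; h \<in> carrier G\<rbrakk>
    \<Longrightarrow> comm G m (g \<otimes> h) = comm G m g \<otimes> comm G m h \<otimes> comm G (comm G m g) h"
  by (simp add: comm_eq_inv_mult_conjugate conjugate_mult conjugate_inv conjugate_conjugate M_ac_simps)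

lemma comm_comm_self:
  assumes "m \<in> M" "g \<in> carrier G"
  shows "comm G (comm G m g) g = m \<otimes> conjugate G g m \<otimes> conjugate G g (conjugate G g m)"
  using assms by (simp add: comm_eq_inv_mult_conjugate conjugate_mult conjugate_inv M_ac_simps)

end

locale exp3_engel_normal = exp3_abelian_normal +
  assumes engel: "m \<in> M \<Longrightarrow> g \<in> carrier G \<Longrightarrow> comm G (comm G m g) g = \<one>"
begin

lemma comm_inv_right:
  assumes m: "m \<in> M" and h: "h \<in> carrier G"
  shows "comm G m (inv h) = inv (comm G m h)"
proof -
  define z where "z = conjugate G (inv h) m"
  have z: "z \<in> M" using m h by (simp add: z_def)
  have "conjugate G h z = m" using m h by (simp add: z_def conjugate_conjugate)
  then have "z \<otimes> m \<otimes> conjugate G h m = \<one>"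
    using engel[OF z h] comm_comm_self[OF z h] by simp
  then have "z = inv (m \<otimes> conjugate G h m)"
    using m h z by (intro inv_equality[symmetric]) (auto simp: m_assoc)
  then show ?thesis
    using m h by (simp add: comm_eq_inv_mult_conjugate z_def[symmetric] M_ac_simps)
qed

lemmas comm_expand = comm_mult_left comm_inv_left comm_mult_right comm_inv_right engel

lemma comm_sandwich_eq_one:
  assumes m: "m \<in> M" and g: "g \<in> carrier G" and h: "h \<in> carrier G"
  shows "comm G (comm G (comm G m g) h) g = \<one>"
proof -
  define u where "u = comm G (comm G (comm G m g) h) g"
  define v where "v = comm G u h"
  have uv: "u \<in> M" "v \<in> M" using m g h by (auto simp: u_def v_def)
  \<comment> \<open>Expanding [m,g,gh,gh] and [m,g,gh^-1,gh^-1], both trivial by Engel, gives uv and u^-1 v.\<close>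
  have "u \<otimes> v = comm G (comm G (comm G m g) (g \<otimes> h)) (g \<otimes> h)"
    using m g h by (simp add: u_def v_def comm_expand M_ac_simps)
  then have uv_one: "u \<otimes> v = \<one>" using m g h by (simp add: engel)
  have "inv u \<otimes> v = comm G (comm G (comm G m g) (g \<otimes> inv h)) (g \<otimes> inv h)"
    using m g h by (simp add: u_def v_def comm_expand M_ac_simps)
  then have inv_uv_one: "inv u \<otimes> v = \<one>" using m g h by (simp add: engel)
  have "u = (inv u \<otimes> v) \<otimes> inv (u \<otimes> v)" using uv by (simp add: M_ac_simps)
  also have "\<dots> = \<one>" unfolding uv_one inv_uv_one by simp
  finally show ?thesis by (simp add: u_def)
qed

lemma comm_comm_swap:
  assumes m: "m \<in> M" and g: "g \<in> carrier G" and h: "h \<in> carrier G"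
  shows "comm G (comm G m g) h = inv (comm G (comm G m h) g)"
proof -
  have a: "comm G (comm G m (g \<otimes> h)) (g \<otimes> h) = \<one>"
    and b: "comm G (comm G m (g \<otimes> inv h)) (g \<otimes> inv h) = \<one>"
    using m g h by (simp_all add: engel)
  \<comment> \<open>Linearisation: the quotient of the two trivial commutators is ([m,g,h][m,h,g])^2.\<close>
  have "comm G (comm G m g) h \<otimes> comm G (comm G m h) g
      = (comm G (comm G m (g \<otimes> h)) (g \<otimes> h) \<otimes> inv (comm G (comm G m (g \<otimes> inv h)) (g \<otimes> inv h)))
        [^] (2::nat)"
    using m g h by (simp add: numeral_2_eq_2 comm_expand comm_sandwich_eq_one M_ac_simps)
  then have "comm G (comm G m g) h \<otimes> comm G (comm G m h) g = \<one>"
    unfolding a b by simp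
  then show ?thesis using m g h by (intro inv_equality[symmetric]) auto
qed

lemma lcomm_closed: "m \<in> M \<Longrightarrow> set ys \<subseteq> carrier G \<Longrightarrow> lcomm G m ys \<in> M"
  by (induction ys arbitrary: m) auto

lemma lcomm_inv: "m \<in> M \<Longrightarrow> set ys \<subseteq> carrier G \<Longrightarrow> lcomm G (inv m) ys = inv (lcomm G m ys)"
  by (induction ys arbitrary: m) (auto simp: comm_inv_left)

lemma lcomm_swap_adjacent:
  assumes m: "m \<in> M" and ys: "set (A @ a # b # C) \<subseteq> carrier G"
  shows "lcomm G m (A @ b # a # C) = inv (lcomm G m (A @ a # b # C))"
proof -
  define m' where "m' = lcomm G m A"
  have m': "m' \<in> M" using lcomm_closed m ys by (auto simp: m'_def)
  have ab: "a \<in> carrier G" "b \<in> carrier G" using ys by auto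
  have "lcomm G m (A @ b # a # C) = lcomm G (comm G (comm G m' b) a) C"
    by (simp add: lcomm_append m'_def)
  also have "\<dots> = lcomm G (inv (comm G (comm G m' a) b)) C"
    using comm_comm_swap[OF m' ab(2,1)] by simp
  also have "\<dots> = inv (lcomm G m (A @ a # b # C))"
    using m' ys by (simp add: lcomm_inv lcomm_append m'_def)
  finally show ?thesis .
qed

lemma lcomm_swap:
  assumes m: "m \<in> M"
  shows "set (A @ a # B @ b # C) \<subseteq> carrier G
    \<Longrightarrow> lcomm G m (A @ b # B @ a # C) = inv (lcomm G m (A @ a # B @ b # C))"
proof (induction B arbitrary: A)
  case Nil
  then show ?case using lcomm_swap_adjacent[OF m, of A a b C] by simp
next
  case (Cons c B)
  have ys: "set (A @ a # c # B @ b # C) \<subseteq> carrier G" using Cons.prems by simp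
  have "lcomm G m (A @ b # c # B @ a # C) = inv (lcomm G m (A @ c # b # B @ a # C))"
    by (rule lcomm_swap_adjacent[OF m]) (use ys in auto)
  also have "lcomm G m (A @ c # b # B @ a # C) = inv (lcomm G m (A @ c # a # B @ b # C))"
    using Cons.IH[of "A @ [c]"] ys by simp
  also have "lcomm G m (A @ c # a # B @ b # C) = inv (lcomm G m (A @ a # c # B @ b # C))"
    by (rule lcomm_swap_adjacent[OF m]) (use ys in auto)
  finally show ?case
    using lcomm_closed[OF m] ys by simp
qed

lemma lcomm_map_transpose:
  assumes m: "m \<in> M" and ys: "distinct ys" "a \<in> set ys" "b \<in> set ys" "a \<noteq> b"
    and f: "f ` set ys \<subseteq> carrier G"
  shows "lcomm G m (map (f \<circ> Transposition.transpose a b) ys) = inv (lcomm G m (map f ys))"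
proof -
  have swap: "lcomm G m (map (f \<circ> Transposition.transpose a' b') ys) = inv (lcomm G m (map f ys))"
    if split: "ys = A @ a' # B @ b' # C" for a' b' A B C
  proof -
    have "map (f \<circ> Transposition.transpose a' b') ys = map f A @ f b' # map f B @ f a' # map f C"
      using ys(1) unfolding split by (auto intro!: map_cong arg_cong[where f = f] transpose_apply_other)
    moreover have "map f ys = map f A @ f a' # map f B @ f b' # map f C"
      by (simp add: split)
    moreover have "set (map f A @ f a' # map f B @ f b' # map f C) \<subseteq> carrier G"
      using f unfolding split by auto
    ultimately show ?thesis
      using lcomm_swap[OF m, of "map f A" "f a'" "map f B" "f b'" "map f C"] by simp
  qed
  obtain A B C where "ys = A @ a # B @ b # C \<or> ys = A @ b # B @ a # C"
    using split_list_two[OF ys(2-4)] .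
  then show ?thesis
    using swap transpose_commute[of a b] by metis
qed

lemma lcomm_map_permutes:
  assumes m: "m \<in> M" and p: "p permutes set xs" and xs: "distinct xs"
    and f: "f ` set xs \<subseteq> carrier G"
  shows "lcomm G m (map (f \<circ> p) xs)
    = (if evenperm p then lcomm G m (map f xs) else inv (lcomm G m (map f xs)))"
  using p finite_set[of xs]
proof (induction p rule: permutes_induct)
  case id
  then show ?case by simp
next
  case (swap a b p)
  have ys: "distinct (map p xs)" "set (map p xs) = set xs"
    using xs permutes_inj_on[OF swap.hyps(4)] permutes_image[OF swap.hyps(4)]
    by (simp_all add: distinct_map)
  have "lcomm G m (map (f \<circ> (Transposition.transpose a b \<circ> p)) xs)
      = lcomm G m (map (f \<circ> Transposition.transpose a b) (map p xs))"
    by (simp add: comp_assoc)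
  also have "\<dots> = inv (lcomm G m (map (f \<circ> p) xs))"
    using lcomm_map_transpose[OF m ys(1)] swap.hyps(1-3) ys(2) f by simp
  finally have lc: "lcomm G m (map (f \<circ> (Transposition.transpose a b \<circ> p)) xs)
      = inv (lcomm G m (map (f \<circ> p) xs))" .
  have ev: "evenperm (Transposition.transpose a b \<circ> p) \<longleftrightarrow> \<not> evenperm p"
    using evenperm_comp[OF permutation_swap_id[of a b] permutes_imp_permutation[OF _ swap.hyps(4)]]
      evenperm_swap[of a b] swap.hyps(3) by simp
  have "lcomm G m (map f xs) \<in> carrier G"
    using lcomm_closed[OF m] f by simp
  then show ?case
    unfolding lc swap.IH ev by simp
qed

end

context group
begin

lemma semi_3_abelianD:
  "\<lbrakk>semi_3_abelian G; a \<in> carrier G; b \<in> carrier G\<rbrakk>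
    \<Longrightarrow> (a \<otimes> b) [^] (3::nat) = \<one> \<longleftrightarrow> a [^] (3::nat) \<otimes> b [^] (3::nat) = \<one>"
  by (simp add: semi_3_abelian_def)

lemma subgroup_cube_roots:
  assumes semi: "semi_3_abelian G"
  shows "subgroup {g \<in> carrier G. g [^] (3::nat) = \<one>} G"
proof (rule subgroupI)
  fix a assume "a \<in> {g \<in> carrier G. g [^] (3::nat) = \<one>}"
  then show "inv a \<in> {g \<in> carrier G. g [^] (3::nat) = \<one>}" by (simp add: nat_pow_inv)
next
  fix a b assume "a \<in> {g \<in> carrier G. g [^] (3::nat) = \<one>}" "b \<in> {g \<in> carrier G. g [^] (3::nat) = \<one>}"
  then show "a \<otimes> b \<in> {g \<in> carrier G. g [^] (3::nat) = \<one>}"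
    using semi_3_abelianD[OF semi, of a b] by simp
qed auto

lemma Omega1_eq_cube_roots:
  assumes "semi_3_abelian G"
  shows "Omega1 G = {g \<in> carrier G. g [^] (3::nat) = \<one>}"
proof -
  let ?R = "{g \<in> carrier G. g [^] (3::nat) = \<one>}"
  have "generate G ?R \<subseteq> ?R"
    by (rule generate_subgroup_incl[OF subset_refl subgroup_cube_roots[OF assms]])
  moreover have "?R \<subseteq> generate G ?R"
    by (rule subsetI) (rule generate.incl)
  ultimately show ?thesis unfolding Omega1_def by (rule subset_antisym)
qed

lemma cube_root_conjugates_product:
  assumes semi: "semi_3_abelian G"
    and y: "y \<in> carrier G" "y [^] (3::nat) = \<one>" and t: "t \<in> carrier G"
  shows "y \<otimes> conjugate G t y \<otimes> conjugate G t (conjugate G t y) = \<one>"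
proof -
  have "(t \<otimes> (y \<otimes> inv t)) [^] (3::nat) = t \<otimes> y [^] (3::nat) \<otimes> inv t"
    using y(1) t by (simp add: nat_pow_3 group_word_simps)
  then have "t [^] (3::nat) \<otimes> (y \<otimes> inv t) [^] (3::nat) = \<one>"
    using semi_3_abelianD[OF semi, of t "y \<otimes> inv t"] y t by simp
  moreover have "y \<otimes> conjugate G t y \<otimes> conjugate G t (conjugate G t y)
      = inv t \<otimes> inv t \<otimes> inv t \<otimes> (t [^] (3::nat) \<otimes> (y \<otimes> inv t) [^] (3::nat)) \<otimes> t \<otimes> t \<otimes> t"
    using y t by (simp add: conjugate_def nat_pow_3 group_word_simps)
  ultimately show ?thesis
    using t by (simp add: group_word_simps)
qed

lemma cube_root_commutes_with_conjugate:
  assumes semi: "semi_3_abelian G"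
    and y: "y \<in> carrier G" "y [^] (3::nat) = \<one>" and t: "t \<in> carrier G"
  shows "y \<otimes> conjugate G t y = conjugate G t y \<otimes> y"
proof -
  define b where "b = conjugate G t y"
  define c where "c = conjugate G t b"
  have bc: "b \<in> carrier G" "c \<in> carrier G" using y t by (simp_all add: b_def c_def)
  have c3: "c [^] (3::nat) = \<one>"
    unfolding c_def b_def using y t by (simp add: conjugate_nat_pow[symmetric])
  \<comment> \<open>Conjugating backwards from c by t^-1 runs through the same three elements in reverse order.\<close>
  have ybc: "y \<otimes> b \<otimes> c = \<one>"
    using cube_root_conjugates_product[OF semi y t] by (simp add: b_def c_def)
  have cby: "c \<otimes> (b \<otimes> y) = \<one>"
    using cube_root_conjugates_product[OF semi bc(2) c3, of "inv t"] y t
    by (simp add: b_def c_def conjugate_conjugate m_assoc)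
  have "inv c = y \<otimes> b" using ybc y bc by (intro inv_equality) simp_all
  moreover have "inv c = b \<otimes> y" using inv_comm[OF cby] y bc by (intro inv_equality) simp_all
  ultimately show ?thesis by (simp add: b_def)
qed

lemma normal_closure_normal: "x \<in> carrier G \<Longrightarrow> normal_closure G x \<lhd> G"
  unfolding normal_closure_def
proof (rule normal_generateI)
  fix h g assume "x \<in> carrier G" "h \<in> {conjugate G t x | t. t \<in> carrier G}" "g \<in> carrier G"
  then obtain t where "t \<in> carrier G" "h = conjugate G t x" by blast
  then have "g \<otimes> h \<otimes> inv g = conjugate G (t \<otimes> inv g) x"
    using \<open>x \<in> carrier G\<close> \<open>g \<in> carrier G\<close> by (simp add: conjugate_def group_word_simps)
  then show "g \<otimes> h \<otimes> inv g \<in> {conjugate G t x | t. t \<in> carrier G}"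
    using \<open>t \<in> carrier G\<close> \<open>g \<in> carrier G\<close> by blast
qed auto

lemma mem_normal_closure:
  assumes "x \<in> carrier G" shows "x \<in> normal_closure G x"
proof -
  have "x = conjugate G \<one> x" using assms by simp
  then have "x \<in> {conjugate G t x | t. t \<in> carrier G}" using one_closed by blast
  then show ?thesis unfolding normal_closure_def by (rule generate.incl)
qed

lemma exp3_engel_normal_closure:
  assumes semi: "semi_3_abelian G" and "x \<in> Omega1 G"
  shows "exp3_engel_normal (normal_closure G x) G"
proof -
  let ?S = "{conjugate G t x | t. t \<in> carrier G}"
  let ?R = "{g \<in> carrier G. g [^] (3::nat) = \<one>}"
  have x: "x \<in> carrier G" "x [^] (3::nat) = \<one>"
    using assms Omega1_eq_cube_roots by auto
  have S_cube_roots: "?S \<subseteq> ?R"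
  proof
    fix y assume "y \<in> ?S"
    then obtain t where "t \<in> carrier G" "y = conjugate G t x" by blast
    then show "y \<in> ?R" using x conjugate_nat_pow[of t x 3] by simp
  qed
  then have S_carrier: "?S \<subseteq> carrier G" by blast
  have S_commute: "a \<otimes> b = b \<otimes> a" if aS: "a \<in> ?S" and bS: "b \<in> ?S" for a b
  proof -
    obtain s where s: "s \<in> carrier G" "a = conjugate G s x" using aS by blast
    obtain t where t: "t \<in> carrier G" "b = conjugate G t x" using bS by blast
    have a: "a \<in> carrier G" "a [^] (3::nat) = \<one>" using S_cube_roots aS by auto
    have "b = conjugate G (inv s \<otimes> t) a"
      using x s t by (simp add: conjugate_conjugate m_assoc[symmetric])
    then show ?thesis
      using cube_root_commutes_with_conjugate[OF semi a, of "inv s \<otimes> t"] s(1) t(1) by simp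
  qed
  have closure_abelian: "exp3_abelian_normal (normal_closure G x) G"
  proof (rule exp3_abelian_normal.intro[OF is_group], rule exp3_abelian_normal_axioms.intro)
    show "normal_closure G x \<lhd> G" by (rule normal_closure_normal[OF x(1)])
    show "a \<otimes> b = b \<otimes> a" if "a \<in> normal_closure G x" "b \<in> normal_closure G x" for a b
      using generate_pairwise_commute[OF S_carrier S_commute] that
      unfolding normal_closure_def by blast
    show "m [^] (3::nat) = \<one>" if "m \<in> normal_closure G x" for m
      using generate_subgroup_incl[OF S_cube_roots subgroup_cube_roots[OF semi]] that
      unfolding normal_closure_def by blast
  qed
  interpret exp3_abelian_normal "normal_closure G x" G by (rule closure_abelian)
  show ?thesis
  proof (rule exp3_engel_normal.intro[OF closure_abelian], rule exp3_engel_normal_axioms.intro)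
    show "comm G (comm G m g) g = \<one>" if "m \<in> normal_closure G x" "g \<in> carrier G" for m g
      using comm_comm_self[OF that]
        cube_root_conjugates_product[OF semi M_carrier[OF that(1)] cube[OF that(1)] that(2)]
      by simp
  qed
qed

end

theorem lemma3p2:
  fixes G :: "('a, 'b) monoid_scheme" and x :: 'a and k :: nat
    and g :: "nat \<Rightarrow> 'a" and \<sigma> :: "nat \<Rightarrow> nat"
  assumes "p_group 3 G"
    and "semi_3_abelian G"
    and "x \<in> Omega1 G"
    and "k \<ge> 1"
    and "\<And>i. i \<in> {1..k} \<Longrightarrow> g i \<in> carrier G"
    and "\<sigma> permutes {1..k}"
  shows "lcomm G x (map (\<lambda>i. g (\<sigma> i)) [1..<k+1]) =
         lcomm G x (map g [1..<k+1]) [^]\<^bsub>G\<^esub> ((2::nat) ^ (if evenperm \<sigma> then 0 else 1))"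
proof -
  interpret group G using assms(1) by (simp add: p_group_def)
  interpret exp3_engel_normal "normal_closure G x" G
    using exp3_engel_normal_closure[OF assms(2,3)] .
  have x: "x \<in> normal_closure G x"
    using assms(2,3) Omega1_eq_cube_roots mem_normal_closure by auto
  define idx where "idx = [1..<k+1]"
  have idx: "distinct idx" "set idx = {1..k}" by (auto simp: idx_def)
  define Z where "Z = lcomm G x (map g idx)"
  have gs: "g ` set idx \<subseteq> carrier G" using assms(5) idx(2) by auto
  then have "Z \<in> normal_closure G x" unfolding Z_def by (simp add: lcomm_closed[OF x])
  then have pow: "Z [^]\<^bsub>G\<^esub> ((2::nat) ^ (if evenperm \<sigma> then 0 else 1))
      = (if evenperm \<sigma> then Z else inv\<^bsub>G\<^esub> Z)"
    by (simp add: M_inv_eq_square numeral_2_eq_2)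
  have perm: "lcomm G x (map (g \<circ> \<sigma>) idx) = (if evenperm \<sigma> then Z else inv\<^bsub>G\<^esub> Z)"
    using lcomm_map_permutes[OF x _ idx(1) gs] assms(6) idx(2) by (simp add: Z_def)
  show ?thesis
    using perm pow unfolding Z_def idx_def comp_def by (simp only:)
qed

end
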